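(* Let $K\ge2$ and $0<t_0<t_K$ be fixed and put $t_{K-1}:=t_0(t_K/t_0)^{(K-1)/K}$. Among all choices of points $t_0<t_1<\dots<t_{K-2}<t_{K-1}$ (with $t_{K-1}$ and $t_K$ as fixed above), the choice $t_k=t_0(t_K/t_0)^{k/K}$, $1\le k\le K-2$, minimizes $$C_{\mathrm{disc}}=\sum_{k=1}^{K-1}\max\{0,(t_{k+1}-t_k)-(t_k-t_{k-1})\}\frac{1}{t_k}+\frac{t_1-t_0}{t_0}.$$
   Context: The discretization $t_k=t_0(t_K/t_0)^{k/K}$, $0\le k\le K$, is called the log-SNR adapted discretization (it satisfies $t_{k+1}=e^{\Delta}t_k$ with $\Delta=\frac1K\log\frac{t_K}{t_0}$). *)

theory Defs
  imports Complex_Main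
begin

definition C_disc :: "nat \<Rightarrow> (nat \<Rightarrow> real) \<Rightarrow> real" where
  "C_disc K t =
     (\<Sum>k=1..K-1. max 0 ((t (k+1) - t k) - (t k - t (k-1))) * (1 / t k)) + (t 1 - t 0) / t 0"

definition geo_grid :: "real \<Rightarrow> real \<Rightarrow> nat \<Rightarrow> nat \<Rightarrow> real" where
  "geo_grid t0 tK K k = t0 * (tK / t0) powr (real k / real K)"

definition admissible :: "real \<Rightarrow> real \<Rightarrow> nat \<Rightarrow> (nat \<Rightarrow> real) \<Rightarrow> bool" where
  "admissible t0 tK K t \<longleftrightarrow>
     t 0 = t0 \<and> t K = tK \<and> t (K-1) = geo_grid t0 tK K (K-1) \<and>
     (\<forall>k. k < K - 1 \<longrightarrow> t k < t (Suc k))"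

end

theory Submission
  imports Defs
begin

text \<open>Dropping the max can only lower C_disc, and without it the sum telescopes into the last
  step ratio (t_K - t_{K-1}) / t_{K-1}, which is fixed, plus the sum of phi(t_{k+1} / t_k) over
  k < K - 1, where phi x = x + 1/x - 2. These ratios have the fixed product t_{K-1} / t_0, and
  phi (exp s) = 2 cosh s - 2 is convex in s, so the tangent line of phi o exp at the common
  ratio r of the geometric grid shows that equal ratios minimise the sum. On the geometric grid
  all second differences are nonnegative, so there the max is inactive and the bound is attained.\<close>

lemma add_inverse_ge_tangent_ln:
  fixes x r :: real
  assumes "0 < x" "0 < r"
  shows "r + 1/r + (r - 1/r) * (ln x - ln r) \<le> x + 1/x"
proof -
  define y where "y = x / r"
  have "0 < y" using assms by (simp add: y_def)
  have ln_y: "ln y = ln x - ln r" using assms by (simp add: y_def ln_div)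
  have "r * ln y \<le> r * (y - 1)"
    using ln_le_minus_one[OF \<open>0 < y\<close>] assms by simp
  moreover have "(1/r) * (- ln y) \<le> (1/r) * (1/y - 1)"
    using ln_le_minus_one[of "1/y"] \<open>0 < y\<close> assms
    by (intro mult_left_mono) (simp_all add: ln_div)
  ultimately have "(r - 1/r) * ln y \<le> r * (y - 1) + (1/r) * (1/y - 1)"
    by (simp add: algebra_simps)
  also have "\<dots> = x + 1/x - r - 1/r" using assms by (simp add: y_def field_simps)
  finally show ?thesis using ln_y by simp
qed

lemma sum_add_inverse_ge_of_prod:
  fixes x :: "'a \<Rightarrow> real"
  assumes "finite A" "\<And>i. i \<in> A \<Longrightarrow> 0 < x i" "0 < r" "prod x A = r ^ card A"
  shows "real (card A) * (r + 1/r) \<le> (\<Sum>i\<in>A. x i + 1 / x i)"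
proof -
  have sum_ln: "(\<Sum>i\<in>A. ln (x i)) = real (card A) * ln r"
    using assms ln_prod[of A x] by (force simp: ln_realpow)
  have "real (card A) * (r + 1/r)
      = (\<Sum>i\<in>A. r + 1/r + (r - 1/r) * (ln (x i) - ln r))"
    by (simp add: sum.distrib sum_subtractf sum_distrib_left[symmetric] sum_ln)
  also have "\<dots> \<le> (\<Sum>i\<in>A. x i + 1 / x i)"
    using assms by (intro sum_mono add_inverse_ge_tangent_ln) auto
  finally show ?thesis .
qed

lemma second_difference_sum_telescope:
  fixes t :: "nat \<Rightarrow> real"
  assumes "\<And>k. k \<le> n \<Longrightarrow> t k \<noteq> 0"
  shows "(\<Sum>k=1..n. ((t (Suc k) - t k) - (t k - t (k-1))) / t k) + (t 1 - t 0) / t 0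
       = (t (Suc n) - t n) / t n + (\<Sum>k<n. t (Suc k) / t k + t k / t (Suc k) - 2)"
  using assms
proof (induction n)
  case 0
  then show ?case by simp
next
  case (Suc n)
  have "t n \<noteq> 0" "t (Suc n) \<noteq> 0" using Suc.prems by auto
  then have "(t (Suc n) - t n) / t n
        + ((t (Suc (Suc n)) - t (Suc n)) - (t (Suc n) - t n)) / t (Suc n)
      = (t (Suc (Suc n)) - t (Suc n)) / t (Suc n) + (t (Suc n) / t n + t n / t (Suc n) - 2)"
    by (simp add: field_simps)
  then show ?case using Suc by (simp add: algebra_simps)
qed

lemma C_disc_ge_telescoped:
  fixes t :: "nat \<Rightarrow> real"
  assumes "1 \<le> K" "\<And>k. k < K \<Longrightarrow> 0 < t k"
  shows "(t K - t (K-1)) / t (K-1) + (\<Sum>k<K-1. t (Suc k) / t k + t k / t (Suc k) - 2)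
      \<le> C_disc K t"
proof -
  have nonzero: "t k \<noteq> 0" if "k \<le> K - 1" for k
    using assms(2)[of k] that \<open>1 \<le> K\<close> by (simp add: le_diff_conv2)
  have "(t K - t (K-1)) / t (K-1) + (\<Sum>k<K-1. t (Suc k) / t k + t k / t (Suc k) - 2)
      = (\<Sum>k=1..K-1. ((t (Suc k) - t k) - (t k - t (k-1))) / t k) + (t 1 - t 0) / t 0"
    using second_difference_sum_telescope[of "K-1" t] assms by (simp add: nonzero)
  also have "\<dots> \<le> C_disc K t"
    unfolding C_disc_def
  proof (intro add_right_mono sum_mono)
    fix k assume "k \<in> {1..K-1}"
    then have "0 < t k" using assms(2)[of k] by auto
    then show "((t (Suc k) - t k) - (t k - t (k-1))) / t k
        \<le> max 0 ((t (k+1) - t k) - (t k - t (k-1))) * (1 / t k)"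
      by (simp add: divide_right_mono)
  qed
  finally show ?thesis .
qed

lemma C_disc_eq_telescoped:
  fixes t :: "nat \<Rightarrow> real"
  assumes "1 \<le> K" "\<And>k. k < K \<Longrightarrow> 0 < t k"
    and convex: "\<And>k. 1 \<le> k \<Longrightarrow> k < K \<Longrightarrow> t k - t (k-1) \<le> t (Suc k) - t k"
  shows "C_disc K t
      = (t K - t (K-1)) / t (K-1) + (\<Sum>k<K-1. t (Suc k) / t k + t k / t (Suc k) - 2)"
proof -
  have nonzero: "t k \<noteq> 0" if "k \<le> K - 1" for k
    using assms(2)[of k] that \<open>1 \<le> K\<close> by (simp add: le_diff_conv2)
  have "C_disc K t
      = (\<Sum>k=1..K-1. ((t (Suc k) - t k) - (t k - t (k-1))) / t k) + (t 1 - t 0) / t 0"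
    unfolding C_disc_def
  proof (intro arg_cong2[where f="(+)"] sum.cong refl)
    fix k assume "k \<in> {1..K-1}"
    then have "t k - t (k-1) \<le> t (Suc k) - t k" using convex[of k] by auto
    then show "max 0 ((t (k+1) - t k) - (t k - t (k-1))) * (1 / t k)
        = ((t (Suc k) - t k) - (t k - t (k-1))) / t k" by simp
  qed
  also have "\<dots> = (t K - t (K-1)) / t (K-1) + (\<Sum>k<K-1. t (Suc k) / t k + t k / t (Suc k) - 2)"
    using second_difference_sum_telescope[of "K-1" t] assms by (simp add: nonzero)
  finally show ?thesis .
qed

lemma C_disc_geometric:
  fixes c r :: real
  assumes "1 \<le> K" "0 < c" "0 < r"
  shows "C_disc K (\<lambda>k. c * r ^ k) = (r - 1) + real (K - 1) * (r + 1/r - 2)"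
proof -
  have convex: "c * r ^ k - c * r ^ (k-1) \<le> c * r ^ Suc k - c * r ^ k" if "1 \<le> k" for k
  proof -
    obtain j where "k = Suc j" using \<open>1 \<le> k\<close> by (cases k) auto
    then have "(c * r ^ Suc k - c * r ^ k) - (c * r ^ k - c * r ^ (k-1)) = c * r ^ j * (r - 1)\<^sup>2"
      by (simp add: power2_eq_square algebra_simps)
    moreover have "0 \<le> c * r ^ j * (r - 1)\<^sup>2" using assms by simp
    ultimately show ?thesis by linarith
  qed
  have "C_disc K (\<lambda>k. c * r ^ k) = (c * r ^ K - c * r ^ (K-1)) / (c * r ^ (K-1))
      + (\<Sum>k<K-1. c * r ^ Suc k / (c * r ^ k) + c * r ^ k / (c * r ^ Suc k) - 2)"
    using assms convex by (intro C_disc_eq_telescoped) auto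
  also have "(c * r ^ K - c * r ^ (K-1)) / (c * r ^ (K-1)) = r - 1"
    using assms by (cases K) (simp_all add: field_simps)
  also have "(\<Sum>k<K-1. c * r ^ Suc k / (c * r ^ k) + c * r ^ k / (c * r ^ Suc k) - 2)
      = real (K - 1) * (r + 1/r - 2)"
    using assms by (simp add: field_simps)
  finally show ?thesis .
qed

lemma C_disc_ge_geometric:
  fixes t :: "nat \<Rightarrow> real" and r :: real
  assumes "1 \<le> K" "\<And>k. k < K \<Longrightarrow> 0 < t k" "0 < r"
    and "t (K-1) = t 0 * r ^ (K-1)" "t K = t 0 * r ^ K"
  shows "(r - 1) + real (K - 1) * (r + 1/r - 2) \<le> C_disc K t"
proof -
  have pos: "0 < t k" if "k \<le> K - 1" for k
    using assms(2)[of k] that \<open>1 \<le> K\<close> by (simp add: le_diff_conv2)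
  have "(\<Prod>k<K-1. t (Suc k) / t k) = r ^ card {..<K-1}"
    using prod_lessThan_telescope[of "K-1" t] pos assms(4) by force
  then have "real (K - 1) * (r + 1/r) \<le> (\<Sum>k<K-1. t (Suc k) / t k + 1 / (t (Suc k) / t k))"
    using sum_add_inverse_ge_of_prod[of "{..<K-1}" "\<lambda>k. t (Suc k) / t k" r] pos \<open>0 < r\<close>
    by simp
  then have "real (K - 1) * (r + 1/r - 2) \<le> (\<Sum>k<K-1. t (Suc k) / t k + t k / t (Suc k) - 2)"
    by (simp add: sum_subtractf algebra_simps)
  moreover have "(t K - t (K-1)) / t (K-1) = r - 1"
  proof -
    have "t K = r * t (K-1)" using assms by (cases K) auto
    then show ?thesis using pos[of "K-1"] by (simp add: field_simps)
  qed
  ultimately show ?thesis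
    using C_disc_ge_telescoped[of K t, OF assms(1,2)] by linarith
qed

lemma geo_grid_eq_power:
  assumes "0 < t0" "0 < tK"
  shows "geo_grid t0 tK K = (\<lambda>k. t0 * ((tK / t0) powr (1 / real K)) ^ k)"
  using assms by (simp add: geo_grid_def powr_power fun_eq_iff)

lemma admissible_pos:
  assumes "admissible t0 tK K t" "0 < t0" "k < K"
  shows "0 < t k"
  using \<open>k < K\<close>
proof (induction k)
  case 0
  then show ?case using assms(1,2) by (simp add: admissible_def)
next
  case (Suc k)
  then have "t k < t (Suc k)" using assms(1) by (simp add: admissible_def)
  then show ?case using Suc by simp
qed

theorem lemma5:
  fixes K :: nat and t0 tK :: real
  assumes "K \<ge> 2" and "0 < t0" and "t0 < tK"
  shows "admissible t0 tK K (geo_grid t0 tK K) \<and>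
         (\<forall>t. admissible t0 tK K t \<longrightarrow> C_disc K (geo_grid t0 tK K) \<le> C_disc K t)"
proof -
  define r where "r = (tK / t0) powr (1 / real K)"
  have "1 < r" using assms by (simp add: r_def)
  have geo: "geo_grid t0 tK K = (\<lambda>k. t0 * r ^ k)"
    using assms by (simp add: r_def geo_grid_eq_power)
  have "t0 * r ^ K = tK"
    using assms by (simp add: r_def powr_power)
  then have "admissible t0 tK K (geo_grid t0 tK K)"
    using \<open>1 < r\<close> \<open>0 < t0\<close> by (simp add: admissible_def geo)
  moreover have "C_disc K (geo_grid t0 tK K) \<le> C_disc K t" if "admissible t0 tK K t" for t
  proof -
    have ends: "t (K-1) = t 0 * r ^ (K-1)" "t K = t 0 * r ^ K"
      using that \<open>t0 * r ^ K = tK\<close> by (auto simp: admissible_def geo)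
    have "C_disc K (geo_grid t0 tK K) = (r - 1) + real (K - 1) * (r + 1/r - 2)"
      using assms \<open>1 < r\<close> by (simp add: geo C_disc_geometric)
    also have "\<dots> \<le> C_disc K t"
      using assms \<open>1 < r\<close> admissible_pos[OF that \<open>0 < t0\<close>] ends
      by (intro C_disc_ge_geometric) auto
    finally show ?thesis .
  qed
  ultimately show ?thesis by blast
qed

end
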